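(* In the standing setting, let $((\psi_n,\alpha_n):n\ge1)$ be a sequence of elements of $\mathcal{A}\times\mathcal{B}$, and for each $n$ fix a lifting $\psi_n^\uparrow$ of $\psi_n$. Set $\circ_0=\cdot$ and, recursively for $n\ge1$, $$g\circ_n h=g\circ_{n-1}\psi_n^{\uparrow}(g)\circ_{n-1}h\circ_{n-1}\overline{\psi_n^{\uparrow}(g)}\circ_{n-1}\alpha_n(g,h),$$ where $\overline{z}$ denotes the inverse of $z$ with respect to $\circ_{n-1}$. Let $\xi_n=\sum_{\emptyset\ne S\subseteq\{1,\dots,n\}}\prod_{j\in S}\psi_j\in\mathcal{A}$ (ring operations of $\mathcal{A}$, each product taken in increasing order of the indices, e.g. $\psi_1\psi_2$ means $\psi_1\circ\psi_2$), so that $\xi_1=\psi_1$ and $\xi_n=\xi_{n-1}+\psi_n+\xi_{n-1}\psi_n$; and let $q_n$ be a lifting of $\xi_n$ (for instance $q_n=\sum_{\emptyset\ne S}\prod_{j\in S}\psi_j^\uparrow$ with pointwise products and compositions of maps). Then for every $n\ge1$ each $\circ_n$ is a well-defined group operation on $G$ and there exists $\beta_n\in\mathcal{B}$ such that for all $g,h\in G$ $$g\circ_n h=g\cdot q_n(g)\cdot h\cdot q_n(g)^{-1}\cdot\beta_n(g,h),$$ i.e. $\circ_n=\circ_{\xi_n,\beta_n}$. In particular $(G,\cdot,\circ_n)$ is a bi-skew brace for all $n\ge 1$.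
   Context: Standing setting: $(G,\cdot)$ is a group, $K$ is a subgroup of $G$ contained in the centre $Z(G)$, and $A$ is a subgroup with $K\le A\le G$ and $A/K$ abelian. Let $\mathcal{A}=\{\psi\in\operatorname{End}(G/K):\psi(G/K)\le A/K\}$; it is a ring with $(\psi+\phi)(x)=\psi(x)\phi(x)$ and $(\psi\phi)(x)=\psi(\phi(x))$. A lifting of $\psi\in\mathcal{A}$ is any set map $\psi^{\uparrow}:G\to A$ with $\psi^{\uparrow}(g)K=\psi(gK)$ for all $g\in G$. Let $\mathcal{B}$ be the set of maps $\alpha:G\times G\to K$ that are bilinear, i.e. $\alpha(gh,k)=\alpha(g,k)\alpha(h,k)$ and $\alpha(g,hk)=\alpha(g,h)\alpha(g,k)$, and satisfy $\alpha(k,g)=\alpha(g,k)=1$ for all $k\in K$, $g\in G$. For $(\psi,\alpha)\in\mathcal{A}\times\mathcal{B}$ define $g\circ_{\psi,\alpha}h=g\cdot\psi^{\uparrow}(g)\cdot h\cdot\psi^{\uparrow}(g)^{-1}\cdot\alpha(g,h)$ (independent of the lifting). A skew brace is a triple $(G,\cdot,\circ)$ where $(G,\cdot)$ and $(G,\circ)$ are groups and $g\circ(h\cdot k)=(g\circ h)\cdot g^{-1}\cdot(g\circ k)$ for all $g,h,k$. A bi-skew brace is a triple $(G,\cdot,\circ)$ such that both $(G,\cdot,\circ)$ and $(G,\circ,\cdot)$ are skew braces. *)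

theory Defs
  imports "HOL-Algebra.Algebra"
begin

definition Aend :: "'a monoid \<Rightarrow> 'a set \<Rightarrow> 'a set \<Rightarrow> ('a set \<Rightarrow> 'a set) set" where
  "Aend G K A = {\<psi>. \<psi> \<in> hom (G Mod K) (G Mod K) \<and>
      \<psi> ` carrier (G Mod K) \<subseteq> carrier ((G\<lparr>carrier := A\<rparr>) Mod K)}"

definition Aplus :: "'a monoid \<Rightarrow> 'a set \<Rightarrow> ('a set \<Rightarrow> 'a set) \<Rightarrow> ('a set \<Rightarrow> 'a set) \<Rightarrow> ('a set \<Rightarrow> 'a set)" where
  "Aplus G K \<psi> \<chi> = (\<lambda>Z. \<psi> Z <#>\<^bsub>G\<^esub> \<chi> Z)"

definition Atimes :: "('a set \<Rightarrow> 'a set) \<Rightarrow> ('a set \<Rightarrow> 'a set) \<Rightarrow> ('a set \<Rightarrow> 'a set)" where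
  "Atimes \<psi> \<chi> = (\<lambda>Z. \<psi> (\<chi> Z))"

definition lifting :: "'a monoid \<Rightarrow> 'a set \<Rightarrow> 'a set \<Rightarrow> ('a set \<Rightarrow> 'a set) \<Rightarrow> ('a \<Rightarrow> 'a) \<Rightarrow> bool" where
  "lifting G K A \<psi> f \<longleftrightarrow> (\<forall>g\<in>carrier G. f g \<in> A \<and> K #>\<^bsub>G\<^esub> f g = \<psi> (K #>\<^bsub>G\<^esub> g))"

definition Bbil :: "'a monoid \<Rightarrow> 'a set \<Rightarrow> ('a \<Rightarrow> 'a \<Rightarrow> 'a) set" where
  "Bbil G K = {\<alpha>. (\<forall>g\<in>carrier G. \<forall>h\<in>carrier G. \<alpha> g h \<in> K) \<and>
     (\<forall>g\<in>carrier G. \<forall>h\<in>carrier G. \<forall>k\<in>carrier G.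
         \<alpha> (g \<otimes>\<^bsub>G\<^esub> h) k = \<alpha> g k \<otimes>\<^bsub>G\<^esub> \<alpha> h k \<and>
         \<alpha> g (h \<otimes>\<^bsub>G\<^esub> k) = \<alpha> g h \<otimes>\<^bsub>G\<^esub> \<alpha> g k) \<and>
     (\<forall>k\<in>K. \<forall>g\<in>carrier G. \<alpha> k g = \<one>\<^bsub>G\<^esub> \<and> \<alpha> g k = \<one>\<^bsub>G\<^esub>)}"

definition op_struct :: "'a monoid \<Rightarrow> ('a \<Rightarrow> 'a \<Rightarrow> 'a) \<Rightarrow> 'a monoid" where
  "op_struct G m = G\<lparr>mult := m\<rparr>"

primrec ops :: "'a monoid \<Rightarrow> (nat \<Rightarrow> 'a \<Rightarrow> 'a) \<Rightarrow> (nat \<Rightarrow> 'a \<Rightarrow> 'a \<Rightarrow> 'a) \<Rightarrow> nat \<Rightarrow> 'a \<Rightarrow> 'a \<Rightarrow> 'a" where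
  "ops G p \<alpha> 0 = monoid.mult G"
| "ops G p \<alpha> (Suc n) = (\<lambda>g h.
     let m = ops G p \<alpha> n; z = p (Suc n) g in
       m (m (m (m g z) h) (inv\<^bsub>op_struct G m\<^esub> z)) (\<alpha> (Suc n) g h))"

text \<open>\<xi>_0 = 0 (the empty sum), \<xi>_n = \<xi>_{n-1} + \<psi>_n + \<xi>_{n-1}\<psi>_n; hence
  \<xi>_n is the sum over nonempty S \<subseteq> {1..n} of the ordered products of the \<psi>_j.\<close>
primrec xi :: "'a monoid \<Rightarrow> 'a set \<Rightarrow> (nat \<Rightarrow> 'a set \<Rightarrow> 'a set) \<Rightarrow> nat \<Rightarrow> 'a set \<Rightarrow> 'a set" where
  "xi G K \<psi> 0 = (\<lambda>Z. K)"
| "xi G K \<psi> (Suc n) =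
     Aplus G K (Aplus G K (xi G K \<psi> n) (\<psi> (Suc n))) (Atimes (xi G K \<psi> n) (\<psi> (Suc n)))"

definition skew_brace :: "'a monoid \<Rightarrow> 'a monoid \<Rightarrow> bool" where
  "skew_brace G1 G2 \<longleftrightarrow> group G1 \<and> group G2 \<and> carrier G1 = carrier G2 \<and>
     (\<forall>g\<in>carrier G1. \<forall>h\<in>carrier G1. \<forall>k\<in>carrier G1.
        g \<otimes>\<^bsub>G2\<^esub> (h \<otimes>\<^bsub>G1\<^esub> k) =
          ((g \<otimes>\<^bsub>G2\<^esub> h) \<otimes>\<^bsub>G1\<^esub> inv\<^bsub>G1\<^esub> g) \<otimes>\<^bsub>G1\<^esub> (g \<otimes>\<^bsub>G2\<^esub> k))"

definition bi_skew_brace :: "'a monoid \<Rightarrow> 'a monoid \<Rightarrow> bool" where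
  "bi_skew_brace G1 G2 \<longleftrightarrow> skew_brace G1 G2 \<and> skew_brace G2 G1"

end

theory Submission
  imports Defs
begin

text \<open>
  For a map f : G \<rightarrow> A inducing an endomorphism of G/K and a bilinear \<beta> : G \<times> G \<rightarrow> K, put
  g \<star> h = g \<cdot> f(g) h f(g)\<inverse> \<cdot> \<beta>(g,h). Since K is central and A/K is abelian, conjugation by
  f(g) only depends on f(g)K and conjugations by elements of A commute; this makes \<star>
  associative with inverse f(g)\<inverse> g\<inverse> f(g) \<cdot> \<beta>(g,g), and gives both skew brace identities.
  The recursion stays in this family: if \<circ> = \<circ>_(n-1) is \<star> for (f,\<beta>) and z = p_n(g), then
  g \<circ> z \<circ> h \<circ> z\<inverse> \<circ> \<alpha>_n(g,h) (with z\<inverse> taken for \<circ>) equals g \<cdot> r(g) h r(g)\<inverse> \<cdot> \<beta>'(g,h),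
  where r(g) = f(g) z f(z) lifts \<xi>_(n-1) + \<psi>_n + \<xi>_(n-1)\<psi>_n = \<xi>_n and
  \<beta>'(g,h) = \<beta>(g,h) \<alpha>_n(g,h) \<beta>(z,h) \<beta>(h,z)\<inverse> [z, f(h)] is again bilinear, because commutators
  of elements of A lie in K and are bilinear. As \<star> depends on f only modulo K, any lifting q_n
  of \<xi>_n may replace r.
\<close>

section \<open>Conjugation modulo a central subgroup\<close>

definition endo_lift :: "'a monoid \<Rightarrow> 'a set \<Rightarrow> 'a set \<Rightarrow> ('a \<Rightarrow> 'a) \<Rightarrow> bool" where
  "endo_lift G K A f \<longleftrightarrow> (\<forall>g\<in>carrier G. f g \<in> A) \<and>
     (\<forall>g\<in>carrier G. \<forall>h\<in>carrier G. K #>\<^bsub>G\<^esub> f (g \<otimes>\<^bsub>G\<^esub> h) = K #>\<^bsub>G\<^esub> (f g \<otimes>\<^bsub>G\<^esub> f h)) \<and>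
     (\<forall>k\<in>K. f k \<in> K)"

locale central_quotient = group G for G :: "'a monoid" (structure) +
  fixes K A :: "'a set"
  assumes K_subgroup: "subgroup K G"
    and K_central: "\<lbrakk>k \<in> K; g \<in> carrier G\<rbrakk> \<Longrightarrow> k \<otimes> g = g \<otimes> k"
    and A_subgroup: "subgroup A G"
    and K_subset_A: "K \<subseteq> A"
    and A_mod_K_comm: "comm_group ((G\<lparr>carrier := A\<rparr>) Mod K)"
begin

definition A_mod_K :: "'a set monoid" where
  "A_mod_K = (G\<lparr>carrier := A\<rparr>) Mod K"

lemma K_carrier [simp]: "k \<in> K \<Longrightarrow> k \<in> carrier G"
  using K_subgroup by (rule subgroup.mem_carrier)

lemma A_carrier [simp]: "a \<in> A \<Longrightarrow> a \<in> carrier G"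
  using A_subgroup by (rule subgroup.mem_carrier)

lemma K_in_A [simp]: "k \<in> K \<Longrightarrow> k \<in> A"
  using K_subset_A by blast

lemma K_closed [simp]:
  "k \<in> K \<Longrightarrow> l \<in> K \<Longrightarrow> k \<otimes> l \<in> K" "k \<in> K \<Longrightarrow> inv k \<in> K" "\<one> \<in> K"
  using K_subgroup by (simp_all add: subgroup.m_closed subgroup.m_inv_closed subgroup.one_closed)

lemma A_closed [simp]:
  "a \<in> A \<Longrightarrow> b \<in> A \<Longrightarrow> a \<otimes> b \<in> A" "a \<in> A \<Longrightarrow> inv a \<in> A" "\<one> \<in> A"
  using A_subgroup by (simp_all add: subgroup.m_closed subgroup.m_inv_closed subgroup.one_closed)

lemma K_commute: "\<lbrakk>k \<in> K; l \<in> K\<rbrakk> \<Longrightarrow> k \<otimes> l = l \<otimes> k"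
  by (simp add: K_central)

lemma K_left_commute: "\<lbrakk>k \<in> K; l \<in> K; x \<in> carrier G\<rbrakk> \<Longrightarrow> k \<otimes> (l \<otimes> x) = l \<otimes> (k \<otimes> x)"
  by (metis K_carrier K_central m_assoc)

text \<open>AC rules restricted to factors in K: they normalise products of central elements without
  permuting non-central ones.\<close>

lemmas K_ac = m_assoc K_commute K_left_commute

lemma inv_cancel_left [simp]:
  "\<lbrakk>x \<in> carrier G; y \<in> carrier G\<rbrakk> \<Longrightarrow> x \<otimes> (inv x \<otimes> y) = y"
  "\<lbrakk>x \<in> carrier G; y \<in> carrier G\<rbrakk> \<Longrightarrow> inv x \<otimes> (x \<otimes> y) = y"
  by (simp_all add: m_assoc[symmetric])

lemma K_normal: "K \<lhd> G"
  unfolding normal_inv_iff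
proof (intro conjI K_subgroup ballI)
  fix x k assume "x \<in> carrier G" and "k \<in> K"
  then show "x \<otimes> k \<otimes> inv x \<in> K"
    by (simp add: K_central[of k x, symmetric] m_assoc)
qed

lemma rcos_mult: "\<lbrakk>x \<in> carrier G; y \<in> carrier G\<rbrakk> \<Longrightarrow> K #> (x \<otimes> y) = (K #> x) <#> (K #> y)"
  using normal.rcos_sum[OF K_normal] by simp

lemma rcos_K: "k \<in> K \<Longrightarrow> K #> k = K"
  using K_subgroup is_group by (rule subgroup.rcos_const)

lemma rcos_eq_K_imp_in_K: "\<lbrakk>x \<in> carrier G; K #> x = K\<rbrakk> \<Longrightarrow> x \<in> K"
  using rcos_self[OF _ K_subgroup, of x] by simp

lemma rcos_eqD: "\<lbrakk>x \<in> carrier G; K #> x = K #> y\<rbrakk> \<Longrightarrow> \<exists>k\<in>K. x = k \<otimes> y"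
  using rcos_self[OF _ K_subgroup, of x] by (auto simp: r_coset_def)

lemma A_mod_K_carrier [simp]: "a \<in> A \<Longrightarrow> K #> a \<in> carrier A_mod_K"
  by (auto simp: A_mod_K_def FactGroup_def RCOSETS_def r_coset_def)

lemma A_mod_K_mult: "U \<otimes>\<^bsub>A_mod_K\<^esub> V = U <#> V"
  by (simp add: A_mod_K_def FactGroup_def set_mult_def)

lemma A_mod_K_one: "\<one>\<^bsub>A_mod_K\<^esub> = K"
  by (simp add: A_mod_K_def FactGroup_def)

lemma rcos_mult_A_mod_K: "\<lbrakk>x \<in> carrier G; y \<in> carrier G\<rbrakk> \<Longrightarrow> K #> (x \<otimes> y) = (K #> x) \<otimes>\<^bsub>A_mod_K\<^esub> (K #> y)"
  by (simp add: rcos_mult A_mod_K_mult)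

lemma rcos_A_commute: "\<lbrakk>a \<in> A; b \<in> A\<rbrakk> \<Longrightarrow> K #> (a \<otimes> b) = K #> (b \<otimes> a)"
proof -
  assume a: "a \<in> A" and b: "b \<in> A"
  interpret AK: comm_group A_mod_K unfolding A_mod_K_def by (rule A_mod_K_comm)
  show ?thesis
    using a b AK.m_comm by (simp add: rcos_mult_A_mod_K)
qed

definition conjg :: "'a \<Rightarrow> 'a \<Rightarrow> 'a" where
  "conjg a x = a \<otimes> x \<otimes> inv a"

lemma conjg_closed [simp]: "\<lbrakk>a \<in> carrier G; x \<in> carrier G\<rbrakk> \<Longrightarrow> conjg a x \<in> carrier G"
  by (simp add: conjg_def)

lemma conjg_one [simp]: "x \<in> carrier G \<Longrightarrow> conjg \<one> x = x"
  by (simp add: conjg_def)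

lemma conjg_mult: "\<lbrakk>a \<in> carrier G; x \<in> carrier G; y \<in> carrier G\<rbrakk> \<Longrightarrow> conjg a (x \<otimes> y) = conjg a x \<otimes> conjg a y"
  by (simp add: conjg_def m_assoc)

lemma conjg_inv: "\<lbrakk>a \<in> carrier G; x \<in> carrier G\<rbrakk> \<Longrightarrow> conjg a (inv x) = inv (conjg a x)"
  by (simp add: conjg_def inv_mult_group m_assoc)

lemma conjg_K [simp]: "\<lbrakk>a \<in> carrier G; k \<in> K\<rbrakk> \<Longrightarrow> conjg a k = k"
  by (simp add: conjg_def K_central[of k a, symmetric] m_assoc)

lemma conjg_by_K: "\<lbrakk>k \<in> K; x \<in> carrier G\<rbrakk> \<Longrightarrow> conjg k x = x"
  by (simp add: conjg_def K_central[of k x] m_assoc)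

lemma conjg_conjg: "\<lbrakk>a \<in> carrier G; b \<in> carrier G; x \<in> carrier G\<rbrakk> \<Longrightarrow> conjg a (conjg b x) = conjg (a \<otimes> b) x"
  by (simp add: conjg_def m_assoc inv_mult_group)

lemma conjg_inv_conjg [simp]: "\<lbrakk>a \<in> carrier G; x \<in> carrier G\<rbrakk> \<Longrightarrow> conjg a (conjg (inv a) x) = x"
  by (simp add: conjg_def m_assoc)

lemma conjg_rcos_cong:
  assumes "a \<in> carrier G" "b \<in> carrier G" "x \<in> carrier G" "K #> a = K #> b"
  shows "conjg a x = conjg b x"
proof -
  obtain k where "k \<in> K" "a = k \<otimes> b"
    using rcos_eqD assms by blast
  with assms show ?thesis
    by (simp add: conjg_conjg[symmetric] conjg_by_K)
qed

lemma conjg_A_commute: "\<lbrakk>a \<in> A; b \<in> A; x \<in> carrier G\<rbrakk> \<Longrightarrow> conjg a (conjg b x) = conjg b (conjg a x)"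
  by (simp add: conjg_conjg conjg_rcos_cong rcos_A_commute)

definition commutator :: "'a \<Rightarrow> 'a \<Rightarrow> 'a" where
  "commutator x y = x \<otimes> y \<otimes> inv x \<otimes> inv y"

lemma commutator_in_K [simp]: "\<lbrakk>x \<in> A; y \<in> A\<rbrakk> \<Longrightarrow> commutator x y \<in> K"
proof -
  assume "x \<in> A" "y \<in> A"
  then have "x \<otimes> y \<in> K #> (y \<otimes> x)"
    using rcos_A_commute rcos_self[OF _ K_subgroup, of "x \<otimes> y"] by simp
  then have "(x \<otimes> y) \<otimes> inv (y \<otimes> x) \<in> K"
    using subgroup.rcos_module_imp[OF K_subgroup is_group] \<open>x \<in> A\<close> \<open>y \<in> A\<close> by simp
  with \<open>x \<in> A\<close> \<open>y \<in> A\<close> show ?thesis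
    by (simp add: commutator_def inv_mult_group m_assoc)
qed

lemma commutator_K_left: "\<lbrakk>k \<in> K; y \<in> carrier G\<rbrakk> \<Longrightarrow> commutator k y = \<one>"
  by (simp add: commutator_def K_central[of k y] m_assoc)

lemma commutator_K_right: "\<lbrakk>k \<in> K; x \<in> carrier G\<rbrakk> \<Longrightarrow> commutator x k = \<one>"
  using conjg_K[of x k] by (simp add: commutator_def conjg_def)

lemma commutator_mult_left:
  assumes "x \<in> A" "x' \<in> A" "y \<in> A"
  shows "commutator (x \<otimes> x') y = commutator x y \<otimes> commutator x' y"
proof -
  let ?c = "commutator x' y"
  have c: "?c \<in> K" using assms by simp
  have "x' \<otimes> y \<otimes> inv x' = ?c \<otimes> y"
    using assms by (simp add: commutator_def m_assoc)
  then have "commutator (x \<otimes> x') y = x \<otimes> (?c \<otimes> y) \<otimes> inv x \<otimes> inv y"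
    using assms by (simp add: commutator_def inv_mult_group m_assoc)
  also have "\<dots> = commutator x y \<otimes> ?c"
    using assms c by (simp add: m_assoc K_central[of ?c]) (simp add: commutator_def m_assoc)
  finally show ?thesis .
qed

lemma commutator_mult_right:
  assumes "x \<in> A" "y \<in> A" "y' \<in> A"
  shows "commutator x (y \<otimes> y') = commutator x y \<otimes> commutator x y'"
proof -
  let ?c = "commutator x y"
  have "x \<otimes> y = ?c \<otimes> y \<otimes> x"
    using assms by (simp add: commutator_def m_assoc)
  then have "commutator x (y \<otimes> y') = (?c \<otimes> y \<otimes> x) \<otimes> (y' \<otimes> inv x \<otimes> inv y') \<otimes> inv y"
    using assms by (simp add: commutator_def inv_mult_group m_assoc)
  also have "\<dots> = ?c \<otimes> conjg y (commutator x y')"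
    using assms by (simp add: commutator_def conjg_def m_assoc del: commutator_in_K)
  finally show ?thesis
    using assms by simp
qed

lemma endo_lift_in_A [simp]: "\<lbrakk>endo_lift G K A f; g \<in> carrier G\<rbrakk> \<Longrightarrow> f g \<in> A"
  unfolding endo_lift_def by blast

lemma endo_lift_K [simp]: "\<lbrakk>endo_lift G K A f; k \<in> K\<rbrakk> \<Longrightarrow> f k \<in> K"
  unfolding endo_lift_def by blast

lemma endo_lift_mult_rcos:
  "\<lbrakk>endo_lift G K A f; g \<in> carrier G; h \<in> carrier G\<rbrakk> \<Longrightarrow> K #> f (g \<otimes> h) = (K #> f g) \<otimes>\<^bsub>A_mod_K\<^esub> (K #> f h)"
  unfolding endo_lift_def by (simp add: rcos_mult_A_mod_K)

lemma endo_lift_multE: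
  assumes "endo_lift G K A f" "g \<in> carrier G" "h \<in> carrier G"
  obtains k where "k \<in> K" "f (g \<otimes> h) = k \<otimes> (f g \<otimes> f h)"
proof -
  have "K #> f (g \<otimes> h) = K #> (f g \<otimes> f h)"
    using assms unfolding endo_lift_def by blast
  moreover have "f (g \<otimes> h) \<in> carrier G"
    using assms by simp
  ultimately show thesis
    using that rcos_eqD by blast
qed

lemma endo_lift_K_rcos: "\<lbrakk>endo_lift G K A f; k \<in> K\<rbrakk> \<Longrightarrow> K #> f k = \<one>\<^bsub>A_mod_K\<^esub>"
  by (simp add: A_mod_K_one rcos_K)

lemma endo_lift_inv_rcos:
  "\<lbrakk>endo_lift G K A f; g \<in> carrier G\<rbrakk> \<Longrightarrow> (K #> f g) \<otimes>\<^bsub>A_mod_K\<^esub> (K #> f (inv g)) = \<one>\<^bsub>A_mod_K\<^esub>"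
  using endo_lift_mult_rcos[of f g "inv g"] endo_lift_K_rcos[of f \<one>] by simp

lemma lifting_imp_endo_lift:
  assumes "\<psi> \<in> Aend G K A" and lift: "lifting G K A \<psi> p"
  shows "endo_lift G K A p"
proof -
  interpret GK: group "G Mod K"
    using K_normal by (rule normal.factorgroup_is_group)
  have hom: "\<psi> \<in> hom (G Mod K) (G Mod K)"
    using assms(1) by (simp add: Aend_def)
  have p: "p g \<in> A" "K #> p g = \<psi> (K #> g)" if "g \<in> carrier G" for g
    using lift that unfolding lifting_def by blast+
  have coset: "K #> g \<in> carrier (G Mod K)" if "g \<in> carrier G" for g
    using that by (simp add: FactGroup_def rcosetsI subgroup.subset[OF K_subgroup])
  show ?thesis
    unfolding endo_lift_def
  proof (intro conjI ballI)
    fix g h assume gh: "g \<in> carrier G" "h \<in> carrier G"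
    have "K #> p (g \<otimes> h) = \<psi> ((K #> g) \<otimes>\<^bsub>G Mod K\<^esub> (K #> h))"
      using p gh by (simp add: rcos_mult)
    also have "\<dots> = \<psi> (K #> g) \<otimes>\<^bsub>G Mod K\<^esub> \<psi> (K #> h)"
      using hom_mult[OF hom coset coset] gh by simp
    also have "\<dots> = K #> (p g \<otimes> p h)"
      using p gh by (simp add: rcos_mult)
    finally show "K #> p (g \<otimes> h) = K #> (p g \<otimes> p h)" .
  next
    fix k assume k: "k \<in> K"
    have "group_hom (G Mod K) (G Mod K) \<psi>"
      by (simp add: group_hom_def group_hom_axioms_def GK.is_group hom)
    then have "\<psi> K = K"
      by (metis group_hom.hom_one FactGroup_def monoid.select_convs(2))
    then have "K #> p k = K"
      using p[of k] k rcos_K[OF k] by simp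
    moreover have "p k \<in> carrier G"
      using p[of k] k by simp
    ultimately show "p k \<in> K"
      by (rule rcos_eq_K_imp_in_K[rotated])
  qed (use p in blast)
qed

definition next_lift :: "('a \<Rightarrow> 'a) \<Rightarrow> ('a \<Rightarrow> 'a) \<Rightarrow> 'a \<Rightarrow> 'a" where
  "next_lift f p g = f g \<otimes> p g \<otimes> f (p g)"

lemma endo_lift_next_lift:
  assumes f: "endo_lift G K A f" and p: "endo_lift G K A p"
  shows "endo_lift G K A (next_lift f p)"
  unfolding endo_lift_def
proof (intro conjI ballI)
  interpret AK: comm_group A_mod_K unfolding A_mod_K_def by (rule A_mod_K_comm)
  fix g h assume gh: "g \<in> carrier G" "h \<in> carrier G"
  obtain k where "k \<in> K" "p (g \<otimes> h) = k \<otimes> (p g \<otimes> p h)"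
    using endo_lift_multE[OF p gh] .
  then have fp: "K #> f (p (g \<otimes> h)) = (K #> f (p g)) \<otimes>\<^bsub>A_mod_K\<^esub> (K #> f (p h))"
    using gh f p by (simp add: endo_lift_mult_rcos[OF f] endo_lift_K_rcos[OF f])
  show "K #> next_lift f p (g \<otimes> h) = K #> (next_lift f p g \<otimes> next_lift f p h)"
    using gh f p
    by (simp add: next_lift_def rcos_mult_A_mod_K endo_lift_mult_rcos[OF f] endo_lift_mult_rcos[OF p]
        fp AK.m_ac del: r_coset_def)
qed (use f p in \<open>simp_all add: next_lift_def\<close>)

lemma lifting_next_lift:
  assumes f: "lifting G K A \<xi> f" and p: "lifting G K A \<psi> p"
  shows "lifting G K A (Aplus G K (Aplus G K \<xi> \<psi>) (Atimes \<xi> \<psi>)) (next_lift f p)"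
  unfolding lifting_def
proof (intro ballI conjI)
  fix g assume g: "g \<in> carrier G"
  have pg: "p g \<in> A" "K #> p g = \<psi> (K #> g)"
    using p g unfolding lifting_def by blast+
  have fx: "f x \<in> A" "K #> f x = \<xi> (K #> x)" if "x \<in> carrier G" for x
    using f that unfolding lifting_def by blast+
  show "next_lift f p g \<in> A"
    using fx g pg by (simp add: next_lift_def)
  show "K #> next_lift f p g = Aplus G K (Aplus G K \<xi> \<psi>) (Atimes \<xi> \<psi>) (K #> g)"
    using fx[of g] fx[of "p g"] g pg by (simp add: next_lift_def Aplus_def Atimes_def rcos_mult)
qed

definition brace_mult :: "('a \<Rightarrow> 'a) \<Rightarrow> ('a \<Rightarrow> 'a \<Rightarrow> 'a) \<Rightarrow> 'a \<Rightarrow> 'a \<Rightarrow> 'a" where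
  "brace_mult f \<beta> g h = g \<otimes> conjg (f g) h \<otimes> \<beta> g h"

definition brace_inv :: "('a \<Rightarrow> 'a) \<Rightarrow> ('a \<Rightarrow> 'a \<Rightarrow> 'a) \<Rightarrow> 'a \<Rightarrow> 'a" where
  "brace_inv f \<beta> g = conjg (inv (f g)) (inv g) \<otimes> \<beta> g g"

text \<open>If \<circ>_(n-1) = \<circ>_(f,\<beta>), then \<circ>_n = \<circ>_(r,\<beta>') with r = next_lift f p_n and \<beta>' = next_form f \<beta> p_n \<alpha>_n.\<close>

definition next_form :: "('a \<Rightarrow> 'a) \<Rightarrow> ('a \<Rightarrow> 'a \<Rightarrow> 'a) \<Rightarrow> ('a \<Rightarrow> 'a) \<Rightarrow> ('a \<Rightarrow> 'a \<Rightarrow> 'a) \<Rightarrow> 'a \<Rightarrow> 'a \<Rightarrow> 'a" where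
  "next_form f \<beta> p \<alpha> g h = \<beta> g h \<otimes> \<alpha> g h \<otimes> \<beta> (p g) h \<otimes> inv (\<beta> h (p g)) \<otimes> commutator (p g) (f h)"

lemma brace_mult_lifting_cong:
  assumes "lifting G K A \<xi> f" "lifting G K A \<xi> f'" "g \<in> carrier G" "h \<in> carrier G"
  shows "brace_mult f \<beta> g h = brace_mult f' \<beta> g h"
proof -
  have "f g \<in> A" "f' g \<in> A" "K #> f g = K #> f' g"
    using assms unfolding lifting_def by auto
  with assms show ?thesis
    unfolding brace_mult_def using conjg_rcos_cong[of "f g" "f' g" h] by simp
qed

lemma brace_mult_unfold:
  "\<lbrakk>g \<in> carrier G; h \<in> carrier G; f g \<in> carrier G; \<beta> g h \<in> carrier G\<rbrakk>
   \<Longrightarrow> brace_mult f \<beta> g h = g \<otimes> f g \<otimes> h \<otimes> inv (f g) \<otimes> \<beta> g h"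
  by (simp add: brace_mult_def conjg_def m_assoc)

end

section \<open>The operations \<circ>_(f,\<beta>)\<close>

locale bilinear_form = central_quotient +
  fixes \<beta> :: "'a \<Rightarrow> 'a \<Rightarrow> 'a"
  assumes bilinear: "\<beta> \<in> Bbil G K"
begin

lemma form_in_K [simp]: "\<lbrakk>g \<in> carrier G; h \<in> carrier G\<rbrakk> \<Longrightarrow> \<beta> g h \<in> K"
  using bilinear unfolding Bbil_def by blast

lemma form_mult_left: "\<lbrakk>g \<in> carrier G; h \<in> carrier G; x \<in> carrier G\<rbrakk> \<Longrightarrow> \<beta> (g \<otimes> h) x = \<beta> g x \<otimes> \<beta> h x"
  using bilinear unfolding Bbil_def by blast

lemma form_mult_right: "\<lbrakk>g \<in> carrier G; h \<in> carrier G; x \<in> carrier G\<rbrakk> \<Longrightarrow> \<beta> x (g \<otimes> h) = \<beta> x g \<otimes> \<beta> x h"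
  using bilinear unfolding Bbil_def by blast

lemma form_K_left [simp]: "\<lbrakk>k \<in> K; x \<in> carrier G\<rbrakk> \<Longrightarrow> \<beta> k x = \<one>"
  using bilinear unfolding Bbil_def by blast

lemma form_K_right [simp]: "\<lbrakk>k \<in> K; x \<in> carrier G\<rbrakk> \<Longrightarrow> \<beta> x k = \<one>"
  using bilinear unfolding Bbil_def by blast

lemma form_inv_left: "\<lbrakk>g \<in> carrier G; x \<in> carrier G\<rbrakk> \<Longrightarrow> \<beta> (inv g) x = inv (\<beta> g x)"
  using form_mult_left[of "inv g" g x] by (intro inv_equality[symmetric]) simp_all

lemma form_inv_right: "\<lbrakk>g \<in> carrier G; x \<in> carrier G\<rbrakk> \<Longrightarrow> \<beta> x (inv g) = inv (\<beta> x g)"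
  using form_mult_right[of "inv g" g x] by (intro inv_equality[symmetric]) simp_all

lemma form_conjg_left: "\<lbrakk>a \<in> carrier G; g \<in> carrier G; x \<in> carrier G\<rbrakk> \<Longrightarrow> \<beta> (conjg a g) x = \<beta> g x"
  using conjg_K[of "\<beta> a x" "\<beta> g x"] by (simp add: conjg_def form_mult_left form_inv_left)

lemma form_conjg_right: "\<lbrakk>a \<in> carrier G; g \<in> carrier G; x \<in> carrier G\<rbrakk> \<Longrightarrow> \<beta> x (conjg a g) = \<beta> x g"
  using conjg_K[of "\<beta> x a" "\<beta> x g"] by (simp add: conjg_def form_mult_right form_inv_right)

end

locale brace_data = bilinear_form +
  fixes f :: "'a \<Rightarrow> 'a"
  assumes endo_lift: "endo_lift G K A f"
begin

abbreviation bmult :: "'a \<Rightarrow> 'a \<Rightarrow> 'a" (infixl \<open>\<star>\<close> 70) where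
  "g \<star> h \<equiv> brace_mult f \<beta> g h"

abbreviation bar :: "'a \<Rightarrow> 'a" where
  "bar g \<equiv> brace_inv f \<beta> g"

lemma f_in_A [simp]: "g \<in> carrier G \<Longrightarrow> f g \<in> A"
  using endo_lift by simp

lemma f_K [simp]: "k \<in> K \<Longrightarrow> f k \<in> K"
  using endo_lift by simp

lemma brace_mult_closed [simp]: "\<lbrakk>g \<in> carrier G; h \<in> carrier G\<rbrakk> \<Longrightarrow> g \<star> h \<in> carrier G"
  by (simp add: brace_mult_def)

lemma brace_inv_closed [simp]: "g \<in> carrier G \<Longrightarrow> bar g \<in> carrier G"
  by (simp add: brace_inv_def)

lemma f_brace_mult_rcos:
  assumes "g \<in> carrier G" "h \<in> carrier G"
  shows "K #> f (g \<star> h) = K #> (f g \<otimes> f h)"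
proof -
  interpret AK: comm_group A_mod_K unfolding A_mod_K_def by (rule A_mod_K_comm)
  let ?P = "\<lambda>x. K #> f x"
  have "?P (g \<star> h) = ?P g \<otimes>\<^bsub>A_mod_K\<^esub> ?P (f g) \<otimes>\<^bsub>A_mod_K\<^esub> ?P h
      \<otimes>\<^bsub>A_mod_K\<^esub> ?P (inv (f g)) \<otimes>\<^bsub>A_mod_K\<^esub> ?P (\<beta> g h)"
    using assms by (simp add: brace_mult_def conjg_def endo_lift_mult_rcos[OF endo_lift] AK.m_assoc)
  also have "\<dots> = ?P g \<otimes>\<^bsub>A_mod_K\<^esub> ?P h
      \<otimes>\<^bsub>A_mod_K\<^esub> (?P (f g) \<otimes>\<^bsub>A_mod_K\<^esub> ?P (inv (f g))) \<otimes>\<^bsub>A_mod_K\<^esub> ?P (\<beta> g h)"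
    using assms by (simp add: AK.m_ac)
  also have "\<dots> = ?P g \<otimes>\<^bsub>A_mod_K\<^esub> ?P h"
    using assms by (simp add: endo_lift_inv_rcos[OF endo_lift] endo_lift_K_rcos[OF endo_lift])
  finally show ?thesis
    using assms by (simp add: rcos_mult_A_mod_K)
qed

lemma conjg_f_mult:
  assumes "g \<in> carrier G" "h \<in> carrier G" "x \<in> carrier G"
  shows "conjg (f (g \<otimes> h)) x = conjg (f h) (conjg (f g) x)"
proof -
  have "K #> f (g \<otimes> h) = K #> (f h \<otimes> f g)"
    using endo_lift assms rcos_A_commute[of "f g" "f h"] unfolding endo_lift_def by simp
  with assms show ?thesis
    by (simp add: conjg_conjg conjg_rcos_cong[of "f (g \<otimes> h)" "f h \<otimes> f g"])
qed

lemma conjg_f_brace_mult: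
  assumes "g \<in> carrier G" "h \<in> carrier G" "x \<in> carrier G"
  shows "conjg (f (g \<star> h)) x = conjg (f g) (conjg (f h) x)"
  using assms f_brace_mult_rcos[OF assms(1,2)]
  by (simp add: conjg_conjg conjg_rcos_cong[of "f (g \<star> h)" "f g \<otimes> f h"])

lemma form_brace_mult_left:
  "\<lbrakk>g \<in> carrier G; h \<in> carrier G; x \<in> carrier G\<rbrakk> \<Longrightarrow> \<beta> (g \<star> h) x = \<beta> g x \<otimes> \<beta> h x"
  by (simp add: brace_mult_def form_mult_left form_conjg_left)

lemma form_brace_mult_right:
  "\<lbrakk>g \<in> carrier G; h \<in> carrier G; x \<in> carrier G\<rbrakk> \<Longrightarrow> \<beta> x (g \<star> h) = \<beta> x g \<otimes> \<beta> x h"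
  by (simp add: brace_mult_def form_mult_right form_conjg_right)

lemma brace_mult_assoc:
  assumes "g \<in> carrier G" "h \<in> carrier G" "x \<in> carrier G"
  shows "(g \<star> h) \<star> x = g \<star> (h \<star> x)"
proof -
  have "(g \<star> h) \<star> x = g \<otimes> conjg (f g) h \<otimes> \<beta> g h \<otimes> conjg (f g) (conjg (f h) x) \<otimes> (\<beta> g x \<otimes> \<beta> h x)"
    using assms by (simp add: brace_mult_def[of _ _ "g \<star> h"] conjg_f_brace_mult form_brace_mult_left)
      (simp add: brace_mult_def)
  also have "\<dots> = g \<otimes> (conjg (f g) h \<otimes> conjg (f g) (conjg (f h) x) \<otimes> \<beta> h x) \<otimes> (\<beta> g h \<otimes> \<beta> g x)"
    using assms by (simp add: m_assoc K_central[of "\<beta> g h"]; simp add: K_ac)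
  also have "\<dots> = g \<star> (h \<star> x)"
    using assms by (simp add: brace_mult_def[of _ _ g] form_brace_mult_right)
      (simp add: brace_mult_def conjg_mult)
  finally show ?thesis .
qed

lemma brace_mult_one_left: "h \<in> carrier G \<Longrightarrow> \<one> \<star> h = h"
  by (simp add: brace_mult_def conjg_by_K)

lemma brace_mult_one_right: "g \<in> carrier G \<Longrightarrow> g \<star> \<one> = g"
  by (simp add: brace_mult_def conjg_def)

lemma brace_mult_K_right: "\<lbrakk>g \<in> carrier G; k \<in> K\<rbrakk> \<Longrightarrow> g \<star> k = g \<otimes> k"
  by (simp add: brace_mult_def)

lemma brace_mult_inv_right: "g \<in> carrier G \<Longrightarrow> g \<star> bar g = \<one>"
  by (simp add: brace_mult_def brace_inv_def conjg_mult form_mult_right form_conjg_right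
      form_inv_right m_assoc)

lemma brace_mult_inv_left:
  assumes g: "g \<in> carrier G"
  shows "bar g \<star> g = \<one>"
proof -
  have "bar (bar g) = (g \<star> bar g) \<star> bar (bar g)"
    using g by (simp add: brace_mult_inv_right brace_mult_one_left)
  also have "\<dots> = g \<star> (bar g \<star> bar (bar g))"
    using g by (intro brace_mult_assoc) simp_all
  also have "\<dots> = g"
    using g by (simp add: brace_mult_inv_right brace_mult_one_right)
  finally show ?thesis
    using g brace_mult_inv_right[of "bar g"] by simp
qed

lemma group_op_struct:
  assumes m: "\<And>x y. \<lbrakk>x \<in> carrier G; y \<in> carrier G\<rbrakk> \<Longrightarrow> m x y = x \<star> y"
  shows "group (op_struct G m)"
  unfolding op_struct_def
proof (rule groupI)
  fix x assume "x \<in> carrier (G\<lparr>mult := m\<rparr>)"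
  then show "\<exists>y\<in>carrier (G\<lparr>mult := m\<rparr>). y \<otimes>\<^bsub>G\<lparr>mult := m\<rparr>\<^esub> x = \<one>\<^bsub>G\<lparr>mult := m\<rparr>\<^esub>"
    by (intro bexI[of _ "bar x"]) (simp_all add: m brace_mult_inv_left)
qed (simp_all add: m brace_mult_assoc brace_mult_one_left)

lemma op_struct_inv:
  assumes m: "\<And>x y. \<lbrakk>x \<in> carrier G; y \<in> carrier G\<rbrakk> \<Longrightarrow> m x y = x \<star> y"
    and x: "x \<in> carrier G"
  shows "inv\<^bsub>op_struct G m\<^esub> x = bar x"
  using group.inv_equality[OF group_op_struct[OF m]] x
  by (simp add: op_struct_def m brace_mult_inv_left)

lemma brace_mult_distrib:
  assumes "g \<in> carrier G" "h \<in> carrier G" "k \<in> carrier G"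
  shows "g \<star> (h \<otimes> k) = (g \<star> h) \<otimes> inv g \<otimes> (g \<star> k)"
proof -
  have "g \<star> (h \<otimes> k) = g \<otimes> conjg (f g) h \<otimes> conjg (f g) k \<otimes> (\<beta> g h \<otimes> \<beta> g k)"
    using assms by (simp add: brace_mult_def conjg_mult form_mult_right m_assoc)
  also have "\<dots> = (g \<star> h) \<otimes> inv g \<otimes> (g \<star> k)"
    using assms by (simp add: brace_mult_def m_assoc K_central[of "\<beta> g h"])
  finally show ?thesis .
qed

lemma brace_mult_mult_bar:
  assumes "g \<in> carrier G" "h \<in> carrier G"
  shows "(g \<otimes> h) \<star> bar g = g \<otimes> h \<otimes> inv (conjg (f h) g) \<otimes> inv (\<beta> h g)"
proof -
  have "(g \<otimes> h) \<star> bar g = g \<otimes> h \<otimes> (inv (conjg (f h) g) \<otimes> \<beta> g g) \<otimes> (inv (\<beta> h g) \<otimes> inv (\<beta> g g))"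
    using assms by (simp add: brace_mult_def brace_inv_def conjg_f_mult conjg_mult conjg_inv
        form_mult_left form_mult_right form_conjg_right form_inv_right inv_mult_group)
  also have "\<dots> = g \<otimes> h \<otimes> inv (conjg (f h) g) \<otimes> inv (\<beta> h g)"
    using assms by (simp add: m_assoc K_central[of "\<beta> g g"])
  finally show ?thesis .
qed

lemma f_rcos_twist:
  assumes "g \<in> carrier G" "h \<in> carrier G" "k \<in> K"
  shows "K #> f (g \<otimes> h \<otimes> inv (conjg (f h) g) \<otimes> k) = K #> f h"
proof -
  interpret AK: comm_group A_mod_K unfolding A_mod_K_def by (rule A_mod_K_comm)
  let ?P = "\<lambda>x. K #> f x"
  have "inv (conjg (f h) g) = f h \<otimes> inv g \<otimes> inv (f h)"
    using assms by (simp add: conjg_def inv_mult_group m_assoc)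
  then have "?P (g \<otimes> h \<otimes> inv (conjg (f h) g) \<otimes> k)
      = ?P h \<otimes>\<^bsub>A_mod_K\<^esub> (?P g \<otimes>\<^bsub>A_mod_K\<^esub> ?P (inv g))
        \<otimes>\<^bsub>A_mod_K\<^esub> (?P (f h) \<otimes>\<^bsub>A_mod_K\<^esub> ?P (inv (f h))) \<otimes>\<^bsub>A_mod_K\<^esub> ?P k"
    using assms by (simp add: endo_lift_mult_rcos[OF endo_lift] AK.m_ac)
  also have "\<dots> = ?P h"
    using assms by (simp add: endo_lift_inv_rcos[OF endo_lift] endo_lift_K_rcos[OF endo_lift])
  finally show ?thesis .
qed

lemma mult_brace_mult:
  assumes "g \<in> carrier G" "h \<in> carrier G" "k \<in> carrier G"
  shows "g \<otimes> (h \<star> k) = ((g \<otimes> h) \<star> bar g) \<star> (g \<otimes> k)"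
proof -
  let ?u = "g \<otimes> h \<otimes> inv (conjg (f h) g) \<otimes> inv (\<beta> h g)"
  have u: "?u \<in> carrier G" using assms by simp
  have "conjg (f ?u) y = conjg (f h) y" if "y \<in> carrier G" for y
    using assms that f_rcos_twist[of g h "inv (\<beta> h g)"]
    by (simp add: conjg_rcos_cong[of "f ?u" "f h"])
  moreover have "\<beta> ?u y = \<beta> h y" if "y \<in> carrier G" for y
    using assms that by (simp add: form_mult_left form_inv_left form_conjg_left conjg_by_K[unfolded conjg_def])
  ultimately have "?u \<star> (g \<otimes> k) = ?u \<otimes> (conjg (f h) g \<otimes> conjg (f h) k) \<otimes> (\<beta> h g \<otimes> \<beta> h k)"
    using assms u by (simp add: brace_mult_def conjg_mult form_mult_right)
  also have "\<dots> = g \<otimes> (h \<star> k)"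
    using assms by (simp add: brace_mult_def m_assoc K_central[of "inv (\<beta> h g)"])
  finally show ?thesis
    using assms by (simp add: brace_mult_mult_bar)
qed

lemma bi_skew_brace_op_struct:
  assumes m: "\<And>x y. \<lbrakk>x \<in> carrier G; y \<in> carrier G\<rbrakk> \<Longrightarrow> m x y = x \<star> y"
  shows "bi_skew_brace G (op_struct G m)"
proof -
  have mult: "x \<otimes>\<^bsub>op_struct G m\<^esub> y = m x y" for x y
    by (simp add: op_struct_def)
  have carrier: "carrier (op_struct G m) = carrier G"
    by (simp add: op_struct_def)
  have "m g (h \<otimes> k) = m g h \<otimes> inv g \<otimes> m g k"
    if "g \<in> carrier G" "h \<in> carrier G" "k \<in> carrier G" for g h k
    using that brace_mult_distrib[OF that] by (simp add: m)
  moreover have "g \<otimes> m h k = m (m (g \<otimes> h) (inv\<^bsub>op_struct G m\<^esub> g)) (g \<otimes> k)"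
    if "g \<in> carrier G" "h \<in> carrier G" "k \<in> carrier G" for g h k
    using that mult_brace_mult[OF that] by (simp add: m op_struct_inv[OF m])
  ultimately show ?thesis
    unfolding bi_skew_brace_def skew_brace_def mult carrier
    using is_group group_op_struct[OF m] by blast
qed

lemma brace_conj:
  assumes z: "z \<in> A" and h: "h \<in> carrier G"
  shows "z \<star> (h \<star> bar z) = conjg (z \<otimes> f z) h \<otimes> (\<beta> z h \<otimes> inv (\<beta> h z) \<otimes> commutator z (f h))"
proof -
  have zc: "z \<in> carrier G" using z by simp
  have hz: "h \<star> bar z = h \<otimes> conjg (f h) (conjg (inv (f z)) (inv z)) \<otimes> (\<beta> z z \<otimes> inv (\<beta> h z))"
    using zc h by (simp add: brace_mult_def brace_inv_def conjg_mult form_mult_right form_conjg_right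
        form_inv_right m_assoc)
  have "conjg (f z) (conjg (f h) (conjg (inv (f z)) (inv z))) = conjg (f h) (inv z)"
    using zc h conjg_A_commute[of "f z" "f h"] by simp
  also have "\<dots> = inv z \<otimes> commutator z (f h)"
    using zc h by (simp add: conjg_def commutator_def m_assoc)
  finally have "z \<star> (h \<star> bar z) = z \<otimes> (conjg (f z) h \<otimes> (inv z \<otimes> commutator z (f h)) \<otimes> (\<beta> z z \<otimes> inv (\<beta> h z)))
      \<otimes> (\<beta> z h \<otimes> inv (\<beta> z z))"
    using zc h hz by (simp add: brace_mult_def[of _ _ z] conjg_mult form_brace_mult_right form_mult_right
        form_conjg_right form_inv_right brace_inv_def)
  also have "\<dots> = z \<otimes> conjg (f z) h \<otimes> inv z \<otimes>
      (commutator z (f h) \<otimes> (\<beta> z z \<otimes> inv (\<beta> h z)) \<otimes> (\<beta> z h \<otimes> inv (\<beta> z z)))"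
    using z zc h by (simp add: m_assoc)
  also have "commutator z (f h) \<otimes> (\<beta> z z \<otimes> inv (\<beta> h z)) \<otimes> (\<beta> z h \<otimes> inv (\<beta> z z))
      = \<beta> z h \<otimes> inv (\<beta> h z) \<otimes> commutator z (f h)"
    using z zc h
    by (simp add: K_ac; simp add: m_assoc K_left_commute[of "inv (\<beta> h z)" "inv (\<beta> z z)"])
  also have "z \<otimes> conjg (f z) h \<otimes> inv z = conjg (z \<otimes> f z) h"
    using zc h by (simp add: conjg_def m_assoc inv_mult_group)
  finally show ?thesis .
qed

lemma brace_mult_step:
  assumes p: "endo_lift G K A p" and \<alpha>: "\<alpha> \<in> Bbil G K"
    and g: "g \<in> carrier G" and h: "h \<in> carrier G"
  shows "g \<star> p g \<star> h \<star> bar (p g) \<star> \<alpha> g h = brace_mult (next_lift f p) (next_form f \<beta> p \<alpha>) g h"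
proof -
  interpret \<alpha>: bilinear_form G K A \<alpha>
    using \<alpha> by unfold_locales
  let ?z = "p g" and ?a = "\<alpha> g h"
  let ?c = "\<beta> ?z h \<otimes> inv (\<beta> h ?z) \<otimes> commutator ?z (f h)"
  have z: "?z \<in> A" "?z \<in> carrier G"
    using p g by simp_all
  have a: "?a \<in> K"
    using g h by simp
  have c: "?c \<in> K"
    using z h by simp
  have "g \<star> ?z \<star> h \<star> bar ?z \<star> ?a = g \<star> (?z \<star> (h \<star> bar ?z)) \<otimes> ?a"
    using g h z a by (simp add: brace_mult_assoc brace_mult_K_right)
  also have "\<dots> = g \<star> (conjg (?z \<otimes> f ?z) h \<otimes> ?c) \<otimes> ?a"
    using z h by (simp add: brace_conj)
  also have "\<dots> = g \<otimes> conjg (next_lift f p g) h \<otimes> (?c \<otimes> \<beta> g h \<otimes> ?a)"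
    using g h z c a
    by (simp add: brace_mult_def next_lift_def conjg_mult conjg_conjg form_mult_right form_conjg_right m_assoc
        del: commutator_in_K)
  also have "?c \<otimes> \<beta> g h \<otimes> ?a = next_form f \<beta> p \<alpha> g h"
    using g h z by (simp add: next_form_def K_ac)
  also have "g \<otimes> conjg (next_lift f p g) h \<otimes> next_form f \<beta> p \<alpha> g h
      = brace_mult (next_lift f p) (next_form f \<beta> p \<alpha>) g h"
    by (rule brace_mult_def[symmetric])
  finally show ?thesis .
qed

lemma next_form_bilinear:
  assumes p: "endo_lift G K A p" and \<alpha>: "\<alpha> \<in> Bbil G K"
  shows "next_form f \<beta> p \<alpha> \<in> Bbil G K"
proof -
  interpret \<alpha>: bilinear_form G K A \<alpha>
    using \<alpha> by unfold_locales
  show ?thesis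
    unfolding Bbil_def
  proof (intro CollectI conjI ballI)
    fix g h assume "g \<in> carrier G" "h \<in> carrier G"
    then show "next_form f \<beta> p \<alpha> g h \<in> K"
      using p by (simp add: next_form_def)
  next
    fix g h k assume ghk: "g \<in> carrier G" "h \<in> carrier G" "k \<in> carrier G"
    obtain k0 where k0: "k0 \<in> K" "p (g \<otimes> h) = k0 \<otimes> (p g \<otimes> p h)"
      using endo_lift_multE[OF p ghk(1,2)] .
    obtain k1 where k1: "k1 \<in> K" "f (h \<otimes> k) = k1 \<otimes> (f h \<otimes> f k)"
      using endo_lift_multE[OF endo_lift ghk(2,3)] .
    have "commutator (p (g \<otimes> h)) (f k) = commutator (p g) (f k) \<otimes> commutator (p h) (f k)"
      using ghk k0 p by (simp add: commutator_mult_left commutator_K_left)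
    moreover have "\<beta> (p (g \<otimes> h)) k = \<beta> (p g) k \<otimes> \<beta> (p h) k"
      using ghk k0 p by (simp add: form_mult_left)
    moreover have "\<beta> k (p (g \<otimes> h)) = \<beta> k (p g) \<otimes> \<beta> k (p h)"
      using ghk k0 p by (simp add: form_mult_right)
    ultimately show "next_form f \<beta> p \<alpha> (g \<otimes> h) k = next_form f \<beta> p \<alpha> g k \<otimes> next_form f \<beta> p \<alpha> h k"
      using ghk p by (simp add: next_form_def form_mult_left \<alpha>.form_mult_left inv_mult_group K_ac)
    have "commutator (p g) (f (h \<otimes> k)) = commutator (p g) (f h) \<otimes> commutator (p g) (f k)"
      using ghk k1 p by (simp add: commutator_mult_right commutator_K_right)
    then show "next_form f \<beta> p \<alpha> g (h \<otimes> k) = next_form f \<beta> p \<alpha> g h \<otimes> next_form f \<beta> p \<alpha> g k"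
      using ghk p
      by (simp add: next_form_def form_mult_left form_mult_right \<alpha>.form_mult_right inv_mult_group K_ac)
  next
    fix k g assume "k \<in> K" "g \<in> carrier G"
    then show "next_form f \<beta> p \<alpha> k g = \<one>" "next_form f \<beta> p \<alpha> g k = \<one>"
      using p by (simp_all add: next_form_def commutator_K_left commutator_K_right)
  qed
qed

end

section \<open>The recursion\<close>

lemma (in central_quotient) ops_eq_brace_mult:
  assumes p: "\<forall>n\<ge>1. endo_lift G K A (p n)" and \<alpha>: "\<forall>n\<ge>1. \<alpha> n \<in> Bbil G K"
    and \<psi>: "\<forall>n\<ge>1. lifting G K A (\<psi> n) (p n)"
  shows "\<exists>r \<beta>. endo_lift G K A r \<and> \<beta> \<in> Bbil G K \<and> lifting G K A (xi G K \<psi> n) r \<and>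
     (\<forall>g\<in>carrier G. \<forall>h\<in>carrier G. ops G p \<alpha> n g h = brace_mult r \<beta> g h)"
proof (induction n)
  case 0
  have "endo_lift G K A (\<lambda>_. \<one>)"
    by (simp add: endo_lift_def)
  moreover have "(\<lambda>_ _. \<one>) \<in> Bbil G K"
    by (simp add: Bbil_def)
  moreover have "lifting G K A (xi G K \<psi> 0) (\<lambda>_. \<one>)"
    by (simp add: lifting_def rcos_K)
  moreover have "ops G p \<alpha> 0 g h = brace_mult (\<lambda>_. \<one>) (\<lambda>_ _. \<one>) g h"
    if "g \<in> carrier G" "h \<in> carrier G" for g h
    using that by (simp add: brace_mult_def)
  ultimately show ?case by blast
next
  case (Suc n)
  then obtain r \<beta> where r: "endo_lift G K A r" "lifting G K A (xi G K \<psi> n) r"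
    and \<beta>: "\<beta> \<in> Bbil G K"
    and ops: "\<forall>g\<in>carrier G. \<forall>h\<in>carrier G. ops G p \<alpha> n g h = brace_mult r \<beta> g h"
    by blast
  interpret brace_data G K A \<beta> r
    using r \<beta> by unfold_locales
  have ops': "\<And>x y. \<lbrakk>x \<in> carrier G; y \<in> carrier G\<rbrakk> \<Longrightarrow> ops G p \<alpha> n x y = brace_mult r \<beta> x y"
    using ops by simp
  have p': "endo_lift G K A (p (Suc n))" and \<alpha>': "\<alpha> (Suc n) \<in> Bbil G K"
    using p \<alpha> by simp_all
  show ?case
  proof (intro exI conjI ballI)
    show "endo_lift G K A (next_lift r (p (Suc n)))"
      using r(1) p' by (rule endo_lift_next_lift)
    show "next_form r \<beta> (p (Suc n)) (\<alpha> (Suc n)) \<in> Bbil G K"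
      using p' \<alpha>' by (rule next_form_bilinear)
    show "lifting G K A (xi G K \<psi> (Suc n)) (next_lift r (p (Suc n)))"
      using lifting_next_lift[OF r(2)] \<psi> by simp
    fix g h assume g: "g \<in> carrier G" and h: "h \<in> carrier G"
    let ?m = "brace_mult r \<beta>"
    have "ops G p \<alpha> (Suc n) g h
        = ?m (?m (?m (?m g (p (Suc n) g)) h) (brace_inv r \<beta> (p (Suc n) g))) (\<alpha> (Suc n) g h)"
      using g h p' \<alpha>' \<alpha>'[unfolded Bbil_def] by (simp add: Let_def ops' op_struct_inv[OF ops'])
    also have "\<dots> = brace_mult (next_lift r (p (Suc n))) (next_form r \<beta> (p (Suc n)) (\<alpha> (Suc n))) g h"
      using p' \<alpha>' g h by (rule brace_mult_step)
    finally show "ops G p \<alpha> (Suc n) g h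
        = brace_mult (next_lift r (p (Suc n))) (next_form r \<beta> (p (Suc n)) (\<alpha> (Suc n))) g h" .
  qed
qed

theorem mainTheorem6:
  fixes G :: "'a monoid" and K A :: "'a set"
    and \<psi> :: "nat \<Rightarrow> 'a set \<Rightarrow> 'a set"
    and \<alpha> :: "nat \<Rightarrow> 'a \<Rightarrow> 'a \<Rightarrow> 'a"
    and p q :: "nat \<Rightarrow> 'a \<Rightarrow> 'a"
  assumes "group G"
    and "subgroup K G"
    and "\<forall>k\<in>K. \<forall>g\<in>carrier G. k \<otimes>\<^bsub>G\<^esub> g = g \<otimes>\<^bsub>G\<^esub> k"
    and "subgroup A G" and "K \<subseteq> A"
    and "comm_group ((G\<lparr>carrier := A\<rparr>) Mod K)"
    and "\<forall>n\<ge>1. \<psi> n \<in> Aend G K A"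
    and "\<forall>n\<ge>1. \<alpha> n \<in> Bbil G K"
    and "\<forall>n\<ge>1. lifting G K A (\<psi> n) (p n)"
    and "\<forall>n\<ge>1. lifting G K A (xi G K \<psi> n) (q n)"
  shows "\<forall>n\<ge>1.
     group (op_struct G (ops G p \<alpha> n)) \<and>
     (\<exists>\<beta>\<in>Bbil G K. \<forall>g\<in>carrier G. \<forall>h\<in>carrier G.
        ops G p \<alpha> n g h =
          g \<otimes>\<^bsub>G\<^esub> q n g \<otimes>\<^bsub>G\<^esub> h \<otimes>\<^bsub>G\<^esub> inv\<^bsub>G\<^esub> (q n g) \<otimes>\<^bsub>G\<^esub> \<beta> g h) \<and>
     bi_skew_brace G (op_struct G (ops G p \<alpha> n))"
proof (intro allI impI)
  fix n :: nat assume n: "n \<ge> 1"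
  interpret central_quotient G K A
    unfolding central_quotient_def central_quotient_axioms_def using assms(1-6) by blast
  have "\<forall>n\<ge>1. endo_lift G K A (p n)"
    using lifting_imp_endo_lift assms(7,9) by blast
  then obtain r \<beta> where r: "endo_lift G K A r" "lifting G K A (xi G K \<psi> n) r"
    and \<beta>: "\<beta> \<in> Bbil G K"
    and ops: "\<forall>g\<in>carrier G. \<forall>h\<in>carrier G. ops G p \<alpha> n g h = brace_mult r \<beta> g h"
    using ops_eq_brace_mult assms(8,9) by blast
  interpret brace_data G K A \<beta> r
    using r \<beta> by unfold_locales
  have q: "lifting G K A (xi G K \<psi> n) (q n)"
    using assms(10) n by simp
  have "ops G p \<alpha> n g h = g \<otimes>\<^bsub>G\<^esub> q n g \<otimes>\<^bsub>G\<^esub> h \<otimes>\<^bsub>G\<^esub> inv\<^bsub>G\<^esub> (q n g) \<otimes>\<^bsub>G\<^esub> \<beta> g h"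
    if "g \<in> carrier G" "h \<in> carrier G" for g h
  proof -
    have "ops G p \<alpha> n g h = brace_mult (q n) \<beta> g h"
      using ops that brace_mult_lifting_cong[OF r(2) q that] by simp
    also have "\<dots> = g \<otimes>\<^bsub>G\<^esub> q n g \<otimes>\<^bsub>G\<^esub> h \<otimes>\<^bsub>G\<^esub> inv\<^bsub>G\<^esub> (q n g) \<otimes>\<^bsub>G\<^esub> \<beta> g h"
      using that q by (intro brace_mult_unfold) (auto simp: lifting_def)
    finally show ?thesis .
  qed
  then show "group (op_struct G (ops G p \<alpha> n)) \<and>
     (\<exists>\<beta>\<in>Bbil G K. \<forall>g\<in>carrier G. \<forall>h\<in>carrier G.
        ops G p \<alpha> n g h = g \<otimes>\<^bsub>G\<^esub> q n g \<otimes>\<^bsub>G\<^esub> h \<otimes>\<^bsub>G\<^esub> inv\<^bsub>G\<^esub> (q n g) \<otimes>\<^bsub>G\<^esub> \<beta> g h) \<and>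
     bi_skew_brace G (op_struct G (ops G p \<alpha> n))"
    using group_op_struct bi_skew_brace_op_struct ops \<beta> by blast
qed

end
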